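(* Let $T:F\to E$ be a positive linear operator between Archimedean vector lattices, and assume that $F$ or $E$ has the $\sigma$-property. If $H$ is a sublattice of $F$ such that $T|_{H}$ is $\sigma$-order continuous, then $T|_{\overline{H}^{1}}$ and $T|_{\overline{H}}$ are $\sigma$-order continuous, where $\overline{H}^1$ and $\overline H$ are the adherence and the closure of $H$ with respect to the uniform convergence on $F$.
   Context: For $e\in F_+$, $F_e=\bigcup_{\lambda\ge0}\lambda[-e,e]$ with norm $\|f\|_e=\inf\{\lambda\ge0:|f|\le\lambda e\}$. A net $(f_\alpha)$ converges uniformly to $f$ if there is $e\in F_+$ with $f\in F_e$ and, for every $\varepsilon>0$, eventually $\|f_\alpha-f\|_e\le\varepsilon$ (in particular $f_\alpha\in F_e$). The (uniform) adherence $\overline{H}^1$ is the set of uniform limits of nets in $H$; a set is closed if it equals its adherence; $\overline H$ is the intersection of all closed sets containing $H$. A vector lattice has the $\sigma$-property if every countable subset is contained in a principal ideal $F_e$. For a sublattice $G\subset F$, $T|_G$ is $\sigma$-order continuous if for every sequence $(g_n)\subset G$ that is decreasing with infimum $0$ in $G$, the sequence $(Tg_n)$ decreases to $0_E$ (infimum $0$ in $E$). *)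

theory Defs
  imports Complex_Main "HOL-Library.Countable_Set"
begin

definition vabs :: "'a::{ordered_real_vector, lattice} \<Rightarrow> 'a" where
  "vabs f = sup f (- f)"

definition archimedean_vl :: "'a::{ordered_real_vector, lattice} itself \<Rightarrow> bool" where
  "archimedean_vl _ \<longleftrightarrow>
     (\<forall>x y :: 'a. 0 \<le> x \<longrightarrow> (\<forall>n::nat. real n *\<^sub>R x \<le> y) \<longrightarrow> x = 0)"

definition principal_ideal :: "'a::{ordered_real_vector, lattice} \<Rightarrow> 'a set" where
  "principal_ideal e = {f. \<exists>l::real. l \<ge> 0 \<and> vabs f \<le> l *\<^sub>R e}"

definition enorm :: "'a::{ordered_real_vector, lattice} \<Rightarrow> 'a \<Rightarrow> real" where
  "enorm e f = Inf {l::real. l \<ge> 0 \<and> vabs f \<le> l *\<^sub>R e}"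

definition sigma_property :: "'a::{ordered_real_vector, lattice} itself \<Rightarrow> bool" where
  "sigma_property _ \<longleftrightarrow>
     (\<forall>C :: 'a set. countable C \<longrightarrow> (\<exists>e\<ge>0. C \<subseteq> principal_ideal e))"

text \<open>Uniform convergence of a net, given as a function on an index type together
  with the filter of its tails (the "eventually" filter of the directed index set).\<close>
definition uniform_conv ::
  "('i \<Rightarrow> 'a::{ordered_real_vector, lattice}) \<Rightarrow> 'i filter \<Rightarrow> 'a \<Rightarrow> bool" where
  "uniform_conv x \<F> f \<longleftrightarrow>
     (\<exists>e\<ge>0. f \<in> principal_ideal e \<and>
        (\<forall>\<epsilon>>0. eventually (\<lambda>\<alpha>. x \<alpha> - f \<in> principal_ideal e \<and> enorm e (x \<alpha> - f) \<le> \<epsilon>) \<F>))"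

text \<open>Uniform adherence: limits of nets in H. A net is represented by its proper
  tail filter on the space itself (nets and proper filters give the same limits).\<close>
definition uadherence :: "'a::{ordered_real_vector, lattice} set \<Rightarrow> 'a set" where
  "uadherence H = {f. \<exists>\<F>::'a filter. \<F> \<noteq> bot \<and> eventually (\<lambda>g. g \<in> H) \<F> \<and> uniform_conv id \<F> f}"

definition uclosed :: "'a::{ordered_real_vector, lattice} set \<Rightarrow> bool" where
  "uclosed C \<longleftrightarrow> uadherence C = C"

definition uclosure :: "'a::{ordered_real_vector, lattice} set \<Rightarrow> 'a set" where
  "uclosure H = \<Inter>{C. H \<subseteq> C \<and> uclosed C}"

definition vector_sublattice :: "'a::{ordered_real_vector, lattice} set \<Rightarrow> bool" where
  "vector_sublattice G \<longleftrightarrow> 0 \<in> G \<and>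
     (\<forall>x\<in>G. \<forall>y\<in>G. x + y \<in> G \<and> sup x y \<in> G \<and> inf x y \<in> G) \<and>
     (\<forall>c::real. \<forall>x\<in>G. c *\<^sub>R x \<in> G)"

definition is_inf_in :: "'a::order set \<Rightarrow> 'a set \<Rightarrow> 'a \<Rightarrow> bool" where
  "is_inf_in G A x \<longleftrightarrow> x \<in> G \<and> (\<forall>a\<in>A. x \<le> a) \<and> (\<forall>y\<in>G. (\<forall>a\<in>A. y \<le> a) \<longrightarrow> y \<le> x)"

definition positive_op ::
  "('f::{ordered_real_vector, lattice} \<Rightarrow> 'e::{ordered_real_vector, lattice}) \<Rightarrow> bool" where
  "positive_op T \<longleftrightarrow> linear T \<and> (\<forall>x. 0 \<le> x \<longrightarrow> 0 \<le> T x)"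

definition sigma_oc_on ::
  "('f::{ordered_real_vector, lattice} \<Rightarrow> 'e::{ordered_real_vector, lattice}) \<Rightarrow> 'f set \<Rightarrow> bool" where
  "sigma_oc_on T G \<longleftrightarrow>
     (\<forall>g :: nat \<Rightarrow> 'f. (\<forall>n. g n \<in> G) \<longrightarrow> decseq g \<longrightarrow> is_inf_in G (range g) 0 \<longrightarrow>
        decseq (\<lambda>n. T (g n)) \<and> is_inf_in UNIV (range (\<lambda>n. T (g n))) 0)"

end

theory Submission
  imports Defs
begin

(* Call f approximable (relative to a positive p and some u >= 0) if for every eps > 0 there
   are h_k in H and errors w_k >= 0 with |f - h_k| <= w_k and inf_k w_k = 0, such that every
   finite family of the w_k is dominated by some B with p B <= eps u.  Elements of H are
   approximable, and a diagonal argument shows that uniform limits of approximable elements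
   are approximable, so the whole uniform closure is.  The sigma-property of the target of p
   (p = id if F has it, p = T if E has it) provides one u serving countably many elements.

   If now g_n decreases to 0 in some G between H and its uniform closure, approximate each
   g_j with eps 2^-(j+1) in place of eps.  The positive parts of the finite infima of the
   approximants h_jk, j, k <= n, decrease to 0 in H, hence their images under T decrease to 0
   in E, and T g_n exceeds the n-th image by at most eps u.  So every lower bound of (T g_n)
   is below eps u for all eps > 0, hence below 0 since E is Archimedean. *)

lemma positive_op_linear: "positive_op T \<Longrightarrow> linear T"
  by (simp add: positive_op_def)

lemma positive_op_nonneg: "positive_op T \<Longrightarrow> 0 \<le> x \<Longrightarrow> 0 \<le> T x"
  by (simp add: positive_op_def)

lemma positive_op_mono:
  assumes "positive_op T" "x \<le> y"
  shows "T x \<le> T y"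
proof -
  have "0 \<le> T (y - x)" using assms by (simp add: positive_op_def)
  also have "T (y - x) = T y - T x" using assms(1) by (simp add: positive_op_def linear_diff)
  finally show ?thesis by simp
qed

lemma positive_op_id: "positive_op (id :: 'a::{ordered_real_vector, lattice} \<Rightarrow> 'a)"
  by (simp add: positive_op_def linear_id)

lemma archimedean_vl_le_zero:
  fixes z e :: "'a::{ordered_real_vector, lattice}"
  assumes arch: "archimedean_vl TYPE('a)" and e: "0 \<le> e"
    and le: "\<And>d. d > 0 \<Longrightarrow> z \<le> d *\<^sub>R e"
  shows "z \<le> 0"
proof -
  have "real n *\<^sub>R sup z 0 \<le> e" for n :: nat
  proof (cases "n = 0")
    case False
    then have n: "real n > 0" by simp
    have "sup z 0 \<le> (1 / real n) *\<^sub>R e"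
      using le[of "1 / real n"] n e by (simp add: scaleR_nonneg_nonneg)
    then have "real n *\<^sub>R sup z 0 \<le> real n *\<^sub>R ((1 / real n) *\<^sub>R e)"
      by (rule scaleR_left_mono) simp
    with n show ?thesis by simp
  qed (use e in simp)
  then have "sup z 0 = 0"
    using arch unfolding archimedean_vl_def by (meson sup_ge2)
  then show ?thesis by (metis sup_ge1)
qed

lemma sum_half_powers_le_one: "(\<Sum>i\<le>n. (1/2::real) ^ Suc i) \<le> 1"
proof -
  have "(\<Sum>i\<le>n. (1/2::real) ^ Suc i) = 1 - (1/2) ^ Suc n"
    by (induction n) simp_all
  then show ?thesis by simp
qed

lemma sum_half_powers_shift_le: "(\<Sum>i\<le>n. (1/2::real) ^ (s + Suc i)) \<le> (1/2) ^ s"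
proof -
  have "(\<Sum>i\<le>n. (1/2::real) ^ (s + Suc i)) = (1/2) ^ s * (\<Sum>i\<le>n. (1/2) ^ Suc i)"
    by (simp add: power_add sum_distrib_left)
  also have "\<dots> \<le> (1/2) ^ s"
    using sum_half_powers_le_one[of n] by (simp add: mult_left_le)
  finally show ?thesis .
qed

lemma vabs_nonneg: "0 \<le> vabs (f :: 'a::{ordered_real_vector, lattice})"
proof -
  have "0 \<le> vabs f + vabs f"
    using add_mono[of f "vabs f" "- f" "vabs f"] unfolding vabs_def by simp
  then have "0 \<le> (1/2::real) *\<^sub>R (vabs f + vabs f)"
    by (rule scaleR_nonneg_nonneg[rotated]) simp
  then show ?thesis by (simp flip: scaleR_2)
qed

lemma vabs_le_iff: "vabs f \<le> a \<longleftrightarrow> f \<le> a \<and> - f \<le> a"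
  by (simp add: vabs_def)

lemma vabs_le_of_enorm_less:
  assumes "f \<in> principal_ideal e" "0 \<le> e" "enorm e f < \<epsilon>"
  shows "vabs f \<le> \<epsilon> *\<^sub>R e"
proof -
  let ?L = "{l::real. l \<ge> 0 \<and> vabs f \<le> l *\<^sub>R e}"
  have "?L \<noteq> {}" using assms(1) unfolding principal_ideal_def by blast
  moreover have "Inf ?L < \<epsilon>" using assms(3) unfolding enorm_def .
  ultimately obtain l where "l \<in> ?L" "l < \<epsilon>" by (rule cInf_lessD[THEN bexE])
  then have "vabs f \<le> l *\<^sub>R e" "l *\<^sub>R e \<le> \<epsilon> *\<^sub>R e"
    using assms(2) by (auto intro: scaleR_right_mono)
  then show ?thesis by (rule order_trans)
qed

lemma uadherence_imp_approx:
  assumes "f \<in> uadherence S"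
  obtains e where "0 \<le> e" "\<And>\<epsilon>. \<epsilon> > 0 \<Longrightarrow> \<exists>x\<in>S. f \<le> x + \<epsilon> *\<^sub>R e \<and> x \<le> f + \<epsilon> *\<^sub>R e"
proof -
  obtain F e where F: "F \<noteq> bot" "eventually (\<lambda>g. g \<in> S) F" and e: "0 \<le> e"
    and conv: "\<And>\<epsilon>. \<epsilon> > 0 \<Longrightarrow> eventually (\<lambda>x. x - f \<in> principal_ideal e \<and> enorm e (x - f) \<le> \<epsilon>) F"
    using assms unfolding uadherence_def uniform_conv_def by auto
  have "\<exists>x\<in>S. f \<le> x + \<epsilon> *\<^sub>R e \<and> x \<le> f + \<epsilon> *\<^sub>R e" if "\<epsilon> > 0" for \<epsilon>
  proof -
    obtain x where "x \<in> S" "x - f \<in> principal_ideal e" "enorm e (x - f) \<le> \<epsilon> / 2"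
      using eventually_happens'[OF F(1) eventually_conj[OF F(2) conv[of "\<epsilon> / 2"]]] \<open>\<epsilon> > 0\<close>
      by auto
    moreover have "enorm e (x - f) < \<epsilon>" using \<open>\<epsilon> > 0\<close> \<open>enorm e (x - f) \<le> \<epsilon> / 2\<close> by linarith
    ultimately have "vabs (x - f) \<le> \<epsilon> *\<^sub>R e"
      using vabs_le_of_enorm_less e by blast
    with \<open>x \<in> S\<close> show ?thesis
      by (auto simp: vabs_le_iff diff_le_eq add.commute)
  qed
  with e that show ?thesis by blast
qed

lemma subset_uadherence: "S \<subseteq> uadherence S"
proof
  fix f assume "f \<in> S"
  have "f \<in> principal_ideal (vabs f)" "0 \<in> principal_ideal (vabs f)"
    unfolding principal_ideal_def
    by (auto intro!: exI[of _ 1] simp: vabs_def vabs_nonneg[unfolded vabs_def])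
  moreover have "enorm (vabs f) 0 \<le> 0"
    unfolding enorm_def by (rule cInf_lower) (auto simp: vabs_def bdd_below_def)
  ultimately have "uniform_conv id (principal {f}) f"
    unfolding uniform_conv_def eventually_principal
    by (intro exI[of _ "vabs f"] conjI vabs_nonneg) auto
  with \<open>f \<in> S\<close> show "f \<in> uadherence S"
    unfolding uadherence_def
    by (auto simp: eventually_principal principal_eq_bot_iff intro!: exI[of _ "principal {f}"])
qed

lemma uadherence_mono: "S \<subseteq> S' \<Longrightarrow> uadherence S \<subseteq> uadherence S'"
  unfolding uadherence_def by (auto elim!: eventually_mono)

lemma uclosure_least: "H \<subseteq> C \<Longrightarrow> uadherence C \<subseteq> C \<Longrightarrow> uclosure H \<subseteq> C"
  unfolding uclosure_def uclosed_def using subset_uadherence by blast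

lemma subset_uclosure: "H \<subseteq> uclosure H"
  unfolding uclosure_def by blast

lemma uadherence_subset_uclosure: "uadherence H \<subseteq> uclosure H"
  unfolding uclosure_def uclosed_def using uadherence_mono by blast

lemma vector_sublattice_Inf_fin:
  assumes "vector_sublattice H" "finite A" "A \<noteq> {}" "A \<subseteq> H"
  shows "Inf_fin A \<in> H"
  using assms(2-4)
  by (induction A rule: finite_ne_induct) (use assms(1) in \<open>auto simp: vector_sublattice_def\<close>)

definition approximating_seq ::
  "'a::{ordered_real_vector, lattice} set \<Rightarrow> 'a \<Rightarrow> (nat \<Rightarrow> 'a) \<Rightarrow> (nat \<Rightarrow> 'a) \<Rightarrow> bool" where
  "approximating_seq H f h w \<longleftrightarrow>
     (\<forall>k. h k \<in> H \<and> f \<le> h k + w k \<and> h k \<le> f + w k) \<and> is_inf_in UNIV (range w) 0"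

definition finitely_bounded ::
  "('a::{ordered_real_vector, lattice} \<Rightarrow> 'b::{ordered_real_vector, lattice}) \<Rightarrow> (nat \<Rightarrow> 'a) \<Rightarrow> 'b \<Rightarrow> bool" where
  "finitely_bounded p w v \<longleftrightarrow> (\<forall>n. \<exists>B. (\<forall>k\<le>n. w k \<le> B) \<and> p B \<le> v)"

definition approximable ::
  "('a::{ordered_real_vector, lattice} \<Rightarrow> 'b::{ordered_real_vector, lattice}) \<Rightarrow> 'a set \<Rightarrow> 'b \<Rightarrow> 'a \<Rightarrow> bool" where
  "approximable p H u f \<longleftrightarrow>
     (\<forall>\<epsilon>>0. \<exists>h w. approximating_seq H f h w \<and> finitely_bounded p w (\<epsilon> *\<^sub>R u))"

lemma approximating_seq_nonneg: "approximating_seq H f h w \<Longrightarrow> 0 \<le> w k"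
  by (simp add: approximating_seq_def is_inf_in_def)

lemma finitely_bounded_mono: "finitely_bounded p w v \<Longrightarrow> v \<le> v' \<Longrightarrow> finitely_bounded p w v'"
  unfolding finitely_bounded_def by (meson order_trans)

lemma finitely_bounded_comp:
  "finitely_bounded p w v \<Longrightarrow> positive_op T \<Longrightarrow> finitely_bounded (T \<circ> p) w (T v)"
  unfolding finitely_bounded_def comp_def by (meson positive_op_mono)

lemma finitely_bounded_add_scaled:
  assumes P: "positive_op p" and w: "finitely_bounded p w (r *\<^sub>R U)"
    and "0 \<le> r" "p e \<le> U"
  shows "finitely_bounded p (\<lambda>k. r *\<^sub>R e + w k) ((2 * r) *\<^sub>R U)"
  unfolding finitely_bounded_def
proof
  fix n
  obtain B where "\<forall>k\<le>n. w k \<le> B" "p B \<le> r *\<^sub>R U"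
    using w unfolding finitely_bounded_def by blast
  moreover have "p (r *\<^sub>R e + B) = r *\<^sub>R p e + p B"
    using positive_op_linear[OF P] by (simp add: linear_add linear_scale)
  moreover have "r *\<^sub>R p e \<le> r *\<^sub>R U"
    using \<open>p e \<le> U\<close> \<open>0 \<le> r\<close> by (rule scaleR_left_mono)
  moreover have "(2 * r) *\<^sub>R U = r *\<^sub>R U + r *\<^sub>R U"
    by (metis scaleR_2 scaleR_scaleR)
  ultimately show "\<exists>B. (\<forall>k\<le>n. r *\<^sub>R e + w k \<le> B) \<and> p B \<le> (2 * r) *\<^sub>R U"
    by (intro exI[of _ "r *\<^sub>R e + B"]) (auto intro: add_left_mono add_mono)
qed

lemma finitely_bounded_sum:
  assumes P: "positive_op p" and bd: "\<And>j. finitely_bounded p (w j) (v j)"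
    and nonneg: "\<And>j k. 0 \<le> w j k"
  obtains W where "\<And>j k. j \<le> n \<Longrightarrow> k \<le> n \<Longrightarrow> w j k \<le> W" "p W \<le> (\<Sum>j\<le>n. v j)"
proof -
  have "\<forall>j. \<exists>B. (\<forall>k\<le>n. w j k \<le> B) \<and> p B \<le> v j"
    using bd unfolding finitely_bounded_def by blast
  then obtain B where B: "\<And>j k. k \<le> n \<Longrightarrow> w j k \<le> B j" "\<And>j. p (B j) \<le> v j"
    by metis
  have B_nonneg: "0 \<le> B j" for j
    using nonneg[of j 0] B(1)[of 0 j] by simp
  have "w j k \<le> (\<Sum>j\<le>n. B j)" if "j \<le> n" "k \<le> n" for j k
  proof -
    have "B j \<le> (\<Sum>j\<le>n. B j)"
      by (rule sum_nonneg_leq_bound[OF _ _ refl]) (use \<open>j \<le> n\<close> B_nonneg in auto)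
    with B(1)[OF \<open>k \<le> n\<close>] show ?thesis by (rule order_trans)
  qed
  moreover have "p (\<Sum>j\<le>n. B j) \<le> (\<Sum>j\<le>n. v j)"
    unfolding linear_sum[OF positive_op_linear[OF P]] by (intro sum_mono B(2))
  ultimately show ?thesis using that by blast
qed

lemma finitely_bounded_diagonal:
  assumes "positive_op p" "\<And>i. finitely_bounded p (w i) (v i)" "\<And>i k. 0 \<le> w i k"
    and "\<And>n. (\<Sum>i\<le>n. v i) \<le> V"
  shows "finitely_bounded p (case_prod w \<circ> prod_decode) V"
  unfolding finitely_bounded_def
proof
  fix n
  obtain W where W: "\<And>i k. i \<le> n \<Longrightarrow> k \<le> n \<Longrightarrow> w i k \<le> W" "p W \<le> (\<Sum>i\<le>n. v i)"
    using finitely_bounded_sum[of p w v n, OF assms(1-3)] by blast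
  have "(case_prod w \<circ> prod_decode) t \<le> W" if "t \<le> n" for t
  proof (cases "prod_decode t")
    case (Pair i k)
    then have "prod_encode (i, k) = t" by (metis prod_decode_inverse)
    then have "i \<le> n" "k \<le> n"
      using le_prod_encode_1[of i k] le_prod_encode_2[of k i] \<open>t \<le> n\<close> by simp_all
    with Pair show ?thesis by (simp add: W(1))
  qed
  with W(2) assms(4) show "\<exists>B. (\<forall>t\<le>n. (case_prod w \<circ> prod_decode) t \<le> B) \<and> p B \<le> V"
    by (meson order_trans)
qed

lemma is_inf_zero_diagonal:
  fixes e :: "'a::{ordered_real_vector, lattice}"
  assumes arch: "archimedean_vl TYPE('a)" and e: "0 \<le> e"
    and r: "r \<longlonglongrightarrow> 0" "\<And>i. 0 \<le> r i"
    and w: "\<And>i. is_inf_in UNIV (range (w i)) 0"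
  shows "is_inf_in UNIV (range (case_prod (\<lambda>i k. r i *\<^sub>R e + w i k) \<circ> prod_decode)) 0"
  unfolding is_inf_in_def
proof (intro conjI ballI impI UNIV_I)
  fix a assume "a \<in> range (case_prod (\<lambda>i k. r i *\<^sub>R e + w i k) \<circ> prod_decode)"
  then obtain t where "a = (case_prod (\<lambda>i k. r i *\<^sub>R e + w i k) \<circ> prod_decode) t" by blast
  then obtain i k where "a = r i *\<^sub>R e + w i k" by (cases "prod_decode t") auto
  then show "0 \<le> a"
    using w[of i] r(2) e unfolding is_inf_in_def by (simp add: scaleR_nonneg_nonneg)
next
  fix z assume z: "\<forall>a\<in>range (case_prod (\<lambda>i k. r i *\<^sub>R e + w i k) \<circ> prod_decode). z \<le> a"
  have "z \<le> r i *\<^sub>R e" for i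
  proof -
    have "z \<le> r i *\<^sub>R e + w i k" for k
      using z[rule_format, OF rangeI[of _ "prod_encode (i, k)"]] by simp
    then have "z - r i *\<^sub>R e \<le> w i k" for k
      by (simp add: diff_le_eq add.commute)
    then have "z - r i *\<^sub>R e \<le> 0"
      using w[of i] unfolding is_inf_in_def by blast
    then show ?thesis by simp
  qed
  show "z \<le> 0"
  proof (rule archimedean_vl_le_zero[OF arch e])
    fix d :: real assume "d > 0"
    then obtain i where "r i < d"
      using order_tendstoD(2)[OF r(1)] by (metis eventually_sequentially order_refl)
    then have "r i *\<^sub>R e \<le> d *\<^sub>R e" using e by (simp add: scaleR_right_mono)
    with \<open>z \<le> r i *\<^sub>R e\<close> show "z \<le> d *\<^sub>R e" by (rule order_trans)
  qed
qed

lemma approximating_seq_diagonal: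
  fixes f e :: "'a::{ordered_real_vector, lattice}"
  assumes arch: "archimedean_vl TYPE('a)" and e: "0 \<le> e"
    and r: "r \<longlonglongrightarrow> 0" "\<And>i. 0 \<le> r i"
    and x: "\<And>i. f \<le> x i + r i *\<^sub>R e" "\<And>i. x i \<le> f + r i *\<^sub>R e"
    and ap: "\<And>i. approximating_seq H (x i) (h i) (w i)"
  shows "approximating_seq H f (case_prod h \<circ> prod_decode)
           (case_prod (\<lambda>i k. r i *\<^sub>R e + w i k) \<circ> prod_decode)"
  unfolding approximating_seq_def
proof (intro conjI allI)
  fix t
  obtain i k where ik: "prod_decode t = (i, k)" by fastforce
  have hw: "h i k \<in> H" "x i \<le> h i k + w i k" "h i k \<le> x i + w i k"
    using ap[of i] unfolding approximating_seq_def by auto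
  have "f \<le> (h i k + w i k) + r i *\<^sub>R e" "h i k \<le> (f + r i *\<^sub>R e) + w i k"
    using x[of i] hw(2,3) by (meson add_right_mono order_trans)+
  with hw(1) ik show "(case_prod h \<circ> prod_decode) t \<in> H"
    "f \<le> (case_prod h \<circ> prod_decode) t + (case_prod (\<lambda>i k. r i *\<^sub>R e + w i k) \<circ> prod_decode) t"
    "(case_prod h \<circ> prod_decode) t \<le> f + (case_prod (\<lambda>i k. r i *\<^sub>R e + w i k) \<circ> prod_decode) t"
    by (simp_all add: ac_simps)
next
  show "is_inf_in UNIV (range (case_prod (\<lambda>i k. r i *\<^sub>R e + w i k) \<circ> prod_decode)) 0"
    using ap unfolding approximating_seq_def by (intro is_inf_zero_diagonal[OF arch e r]) blast
qed

lemma approximable_mono: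
  assumes "approximable p H u f" "u \<le> c *\<^sub>R u'" "0 < c"
  shows "approximable p H u' f"
  unfolding approximable_def
proof (intro allI impI)
  fix \<epsilon> :: real assume "\<epsilon> > 0"
  then obtain h w where "approximating_seq H f h w" "finitely_bounded p w ((\<epsilon> / c) *\<^sub>R u)"
    using assms(1,3) unfolding approximable_def by (meson divide_pos_pos)
  moreover have "(\<epsilon> / c) *\<^sub>R u \<le> \<epsilon> *\<^sub>R u'"
    using scaleR_left_mono[OF assms(2), of "\<epsilon> / c"] \<open>\<epsilon> > 0\<close> assms(3) by simp
  ultimately show "\<exists>h w. approximating_seq H f h w \<and> finitely_bounded p w (\<epsilon> *\<^sub>R u')"
    by (blast intro: finitely_bounded_mono)
qed

lemma approximable_comp:
  assumes "approximable p H u f" "positive_op T"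
  shows "approximable (T \<circ> p) H (T u) f"
  unfolding approximable_def
proof (intro allI impI)
  fix \<epsilon> :: real assume "\<epsilon> > 0"
  then obtain h w where "approximating_seq H f h w" "finitely_bounded p w (\<epsilon> *\<^sub>R u)"
    using assms(1) unfolding approximable_def by blast
  moreover have "T (\<epsilon> *\<^sub>R u) = \<epsilon> *\<^sub>R T u"
    using positive_op_linear[OF assms(2)] by (rule linear_scale)
  ultimately show "\<exists>h w. approximating_seq H f h w \<and> finitely_bounded (T \<circ> p) w (\<epsilon> *\<^sub>R T u)"
    using finitely_bounded_comp[OF _ assms(2)] by metis
qed

lemma approximable_mem:
  assumes "positive_op p" "f \<in> H"
  shows "approximable p H 0 f"
proof -
  have "p 0 = 0" using positive_op_linear[OF assms(1)] by (rule linear_0)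
  then have "approximating_seq H f (\<lambda>k. f) (\<lambda>k. 0) \<and> finitely_bounded p (\<lambda>k. 0) 0"
    using assms(2) unfolding approximating_seq_def finitely_bounded_def is_inf_in_def by auto
  then show ?thesis unfolding approximable_def by auto
qed

lemma approximable_common_bound:
  fixes f :: "nat \<Rightarrow> 'a::{ordered_real_vector, lattice}"
    and p :: "'a \<Rightarrow> 'b::{ordered_real_vector, lattice}"
  assumes sigma: "sigma_property TYPE('b)" and bounds: "\<And>j. \<exists>u. approximable p H u (f j)"
  obtains u where "0 \<le> u" "\<And>j. approximable p H u (f j)"
proof -
  obtain U where U: "\<And>j. approximable p H (U j) (f j)"
    using bounds by metis
  have "countable (range U)" by simp
  then obtain e :: 'b where e: "0 \<le> e" "range U \<subseteq> principal_ideal e"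
    using sigma unfolding sigma_property_def by blast
  have "approximable p H e (f j)" for j
  proof -
    obtain l where "0 \<le> l" "vabs (U j) \<le> l *\<^sub>R e"
      using e(2) unfolding principal_ideal_def by blast
    then have "U j \<le> l *\<^sub>R e" by (simp add: vabs_le_iff)
    also have "\<dots> \<le> (l + 1) *\<^sub>R e" using e(1) by (simp add: scaleR_right_mono)
    finally show ?thesis
      using approximable_mono[OF U] \<open>0 \<le> l\<close> by simp
  qed
  with e(1) that show ?thesis by blast
qed

lemma approximable_of_approximants:
  fixes f e :: "'a::{ordered_real_vector, lattice}"
  assumes arch: "archimedean_vl TYPE('a)" and P: "positive_op p"
    and e: "0 \<le> e" and U: "0 \<le> U" "p e \<le> U"
    and x: "\<And>i. f \<le> x i + (1/2) ^ i *\<^sub>R e" "\<And>i. x i \<le> f + (1/2) ^ i *\<^sub>R e"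
    and xU: "\<And>i. approximable p H U (x i)"
  shows "approximable p H U f"
  unfolding approximable_def
proof (intro allI impI)
  fix \<epsilon> :: real assume "\<epsilon> > 0"
  then obtain s where s: "(1/2::real) ^ s < \<epsilon> / 2"
    using real_arch_pow_inv[of "\<epsilon> / 2" "1/2"] by auto
  define r where "r i = (1/2::real) ^ (s + Suc i)" for i
  have r: "r \<longlonglongrightarrow> 0" "\<And>i. 0 \<le> r i"
    unfolding r_def using LIMSEQ_ignore_initial_segment[OF LIMSEQ_realpow_zero, of "1/2" "s + 1"]
    by (simp_all add: add.commute)
  have "\<forall>i. \<exists>h w. approximating_seq H (x (s + Suc i)) h w \<and> finitely_bounded p w (r i *\<^sub>R U)"
    using xU unfolding approximable_def r_def by simp
  then obtain h w where hw: "\<And>i. approximating_seq H (x (s + Suc i)) (h i) (w i)"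
    "\<And>i. finitely_bounded p (w i) (r i *\<^sub>R U)"
    by metis
  have "approximating_seq H f (case_prod h \<circ> prod_decode)
          (case_prod (\<lambda>i k. r i *\<^sub>R e + w i k) \<circ> prod_decode)"
    by (rule approximating_seq_diagonal[OF arch e r _ _ hw(1)]) (unfold r_def; rule x)+
  moreover have "finitely_bounded p (case_prod (\<lambda>i k. r i *\<^sub>R e + w i k) \<circ> prod_decode) (\<epsilon> *\<^sub>R U)"
  proof (rule finitely_bounded_diagonal[OF P])
    show "finitely_bounded p (\<lambda>k. r i *\<^sub>R e + w i k) ((2 * r i) *\<^sub>R U)" for i
      using finitely_bounded_add_scaled[OF P hw(2) r(2) U(2)] .
    show "0 \<le> r i *\<^sub>R e + w i k" for i k
      using approximating_seq_nonneg[OF hw(1)] r(2) e by (simp add: scaleR_nonneg_nonneg)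
  next
    fix n
    have "(\<Sum>i\<le>n. 2 * r i) = 2 * (\<Sum>i\<le>n. r i)"
      by (simp add: sum_distrib_left)
    then have "(\<Sum>i\<le>n. 2 * r i) \<le> \<epsilon>"
      using sum_half_powers_shift_le[of s n] s unfolding r_def by linarith
    then show "(\<Sum>i\<le>n. (2 * r i) *\<^sub>R U) \<le> \<epsilon> *\<^sub>R U"
      unfolding scaleR_sum_left[symmetric] using U(1) by (rule scaleR_right_mono)
  qed
  ultimately show "\<exists>h w. approximating_seq H f h w \<and> finitely_bounded p w (\<epsilon> *\<^sub>R U)"
    by blast
qed

lemma uadherence_approximable:
  fixes p :: "'a::{ordered_real_vector, lattice} \<Rightarrow> 'b::{ordered_real_vector, lattice}"
  assumes arch: "archimedean_vl TYPE('a)" and sigma: "sigma_property TYPE('b)" and P: "positive_op p"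
  shows "uadherence {f. \<exists>u. approximable p H u f} \<subseteq> {f. \<exists>u. approximable p H u f}"
proof
  fix f assume "f \<in> uadherence {f. \<exists>u. approximable p H u f}"
  then obtain e where e: "0 \<le> e" and near: "\<And>\<epsilon>. \<epsilon> > 0 \<Longrightarrow>
      \<exists>x\<in>{f. \<exists>u. approximable p H u f}. f \<le> x + \<epsilon> *\<^sub>R e \<and> x \<le> f + \<epsilon> *\<^sub>R e"
    by (rule uadherence_imp_approx) blast
  have approximants: "\<forall>i. \<exists>x. (\<exists>u. approximable p H u x) \<and>
      f \<le> x + (1/2::real) ^ i *\<^sub>R e \<and> x \<le> f + (1/2) ^ i *\<^sub>R e"
    using near by simp
  obtain x where x: "\<And>i. \<exists>u. approximable p H u (x i)"
    "\<And>i. f \<le> x i + (1/2) ^ i *\<^sub>R e" "\<And>i. x i \<le> f + (1/2) ^ i *\<^sub>R e"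
    using choice[OF approximants] by blast
  obtain u where u: "0 \<le> u" "\<And>i. approximable p H u (x i)"
    using approximable_common_bound[where f = x, OF sigma x(1)] by blast
  have pe: "0 \<le> p e" using positive_op_nonneg[OF P e] .
  have "approximable p H (u + p e) f"
  proof (rule approximable_of_approximants[OF arch P e _ _ x(2,3)])
    show "0 \<le> u + p e" "p e \<le> u + p e" using u(1) pe by simp_all
    show "approximable p H (u + p e) (x i)" for i
      using approximable_mono[OF u(2), where u' = "u + p e" and c = 1] pe by simp
  qed
  then show "f \<in> {f. \<exists>u. approximable p H u f}" by blast
qed

lemma uclosure_subset_approximable:
  fixes p :: "'a::{ordered_real_vector, lattice} \<Rightarrow> 'b::{ordered_real_vector, lattice}"
  assumes "archimedean_vl TYPE('a)" "sigma_property TYPE('b)" "positive_op p"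
  shows "uclosure H \<subseteq> {f. \<exists>u. approximable p H u f}"
  using approximable_mem[OF assms(3)] uadherence_approximable[OF assms]
  by (intro uclosure_least) auto

definition lower_envelope :: "(nat \<Rightarrow> nat \<Rightarrow> 'a::{lattice, zero}) \<Rightarrow> nat \<Rightarrow> 'a" where
  "lower_envelope h n = sup (Inf_fin (case_prod h ` ({..n} \<times> {..n}))) 0"

lemma lower_envelope_mem:
  assumes "vector_sublattice H" "\<And>j k. h j k \<in> H"
  shows "lower_envelope h n \<in> H"
proof -
  have "Inf_fin (case_prod h ` ({..n} \<times> {..n})) \<in> H"
    using assms by (intro vector_sublattice_Inf_fin) auto
  with assms(1) show ?thesis
    unfolding lower_envelope_def vector_sublattice_def by blast
qed

lemma decseq_lower_envelope: "decseq (lower_envelope h)"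
  unfolding decseq_Suc_iff lower_envelope_def
  by (intro allI sup_mono Inf_fin.subset_imp order_refl image_mono Sigma_mono) auto

lemma lower_envelope_le: "j \<le> n \<Longrightarrow> k \<le> n \<Longrightarrow> lower_envelope h n \<le> sup (h j k) 0"
  unfolding lower_envelope_def by (intro sup_mono Inf_fin.coboundedI order_refl) auto

lemma le_lower_envelope:
  "(\<And>j k. j \<le> n \<Longrightarrow> k \<le> n \<Longrightarrow> a \<le> h j k) \<Longrightarrow> a \<le> lower_envelope h n"
  unfolding lower_envelope_def by (intro le_supI1 Inf_fin.boundedI) auto

lemma is_inf_lower_envelope:
  assumes HS: "vector_sublattice H" and HG: "H \<subseteq> G" and inf: "is_inf_in G (range g) 0"
    and ap: "\<And>j. approximating_seq H (g j) (h j) (w j)"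
  shows "is_inf_in H (range (lower_envelope h)) 0"
  unfolding is_inf_in_def
proof (intro conjI ballI impI)
  show "0 \<in> H" using HS by (simp add: vector_sublattice_def)
  show "0 \<le> a" if "a \<in> range (lower_envelope h)" for a
    using that by (auto simp: lower_envelope_def)
next
  fix y assume "y \<in> H" and y: "\<forall>a\<in>range (lower_envelope h). y \<le> a"
  have "y \<le> g j" for j
  proof -
    have "y - g j \<le> w j k" for k
    proof -
      have "0 \<le> g j + w j k"
        using inf approximating_seq_nonneg[OF ap] unfolding is_inf_in_def by (simp add: add_nonneg_nonneg)
      moreover have "h j k \<le> g j + w j k"
        using ap[of j] unfolding approximating_seq_def by blast
      moreover have "y \<le> sup (h j k) 0"
        using y lower_envelope_le[of j "max j k" k h] by (meson max.cobounded1 max.cobounded2 order_trans rangeI)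
      ultimately have "y \<le> g j + w j k" by (meson le_sup_iff order_trans)
      then show ?thesis by (simp add: diff_le_eq add.commute)
    qed
    then have "y - g j \<le> 0"
      using ap[of j] unfolding approximating_seq_def is_inf_in_def by blast
    then show ?thesis by simp
  qed
  then show "y \<le> 0"
    using inf \<open>y \<in> H\<close> HG unfolding is_inf_in_def by blast
qed

lemma le_lower_envelope_add:
  assumes dec: "decseq g" and ap: "\<And>j. approximating_seq H (g j) (h j) (w j)"
    and W: "\<And>j k. j \<le> n \<Longrightarrow> k \<le> n \<Longrightarrow> w j k \<le> W"
  shows "g n \<le> lower_envelope h n + W"
proof -
  have "g n - W \<le> h j k" if "j \<le> n" "k \<le> n" for j k
  proof -
    have "g n \<le> g j" using dec \<open>j \<le> n\<close> by (simp add: decseq_def)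
    also have "\<dots> \<le> h j k + w j k" using ap[of j] by (simp add: approximating_seq_def)
    also have "\<dots> \<le> h j k + W" using W[OF that] by (rule add_left_mono)
    finally show ?thesis by (simp add: diff_le_eq)
  qed
  then have "g n - W \<le> lower_envelope h n" by (rule le_lower_envelope)
  then show ?thesis by (simp add: diff_le_eq add.commute)
qed

lemma image_le_lower_envelope_add:
  assumes P: "positive_op T" and dec: "decseq g"
    and ap: "\<And>j. approximating_seq H (g j) (h j) (w j)"
    and bd: "\<And>j. finitely_bounded T (w j) (v j)"
  shows "T (g n) \<le> T (lower_envelope h n) + (\<Sum>j\<le>n. v j)"
proof -
  obtain W where W: "\<And>j k. j \<le> n \<Longrightarrow> k \<le> n \<Longrightarrow> w j k \<le> W" "T W \<le> (\<Sum>j\<le>n. v j)"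
    using finitely_bounded_sum[of T w v n, OF P bd approximating_seq_nonneg[OF ap]] by blast
  have "T (g n) \<le> T (lower_envelope h n + W)"
    using le_lower_envelope_add[OF dec ap W(1)] by (rule positive_op_mono[OF P])
  also have "\<dots> = T (lower_envelope h n) + T W"
    using positive_op_linear[OF P] by (rule linear_add)
  also have "\<dots> \<le> T (lower_envelope h n) + (\<Sum>j\<le>n. v j)"
    using W(2) by (rule add_left_mono)
  finally show ?thesis .
qed

lemma is_inf_image_of_approximable:
  fixes T :: "'f::{ordered_real_vector, lattice} \<Rightarrow> 'e::{ordered_real_vector, lattice}"
  assumes arch: "archimedean_vl TYPE('e)" and P: "positive_op T" and HS: "vector_sublattice H"
    and oc: "sigma_oc_on T H" and HG: "H \<subseteq> G"
    and dec: "decseq g" and inf: "is_inf_in G (range g) 0"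
    and u: "0 \<le> u" and approx: "\<And>j. approximable T H u (g j)"
  shows "is_inf_in UNIV (range (\<lambda>n. T (g n))) 0"
  unfolding is_inf_in_def
proof (intro conjI ballI impI UNIV_I)
  show "0 \<le> a" if "a \<in> range (\<lambda>n. T (g n))" for a
    using that inf positive_op_nonneg[OF P] unfolding is_inf_in_def by auto
next
  fix x assume x: "\<forall>a\<in>range (\<lambda>n. T (g n)). x \<le> a"
  show "x \<le> 0"
  proof (rule archimedean_vl_le_zero[OF arch u])
    fix \<epsilon> :: real assume "\<epsilon> > 0"
    define c where "c j = \<epsilon> * (1/2) ^ Suc j" for j
    have "\<forall>j. \<exists>h w. approximating_seq H (g j) h w \<and> finitely_bounded T w (c j *\<^sub>R u)"
      using approx \<open>\<epsilon> > 0\<close> unfolding approximable_def c_def by simp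
    then obtain h w where hw: "\<And>j. approximating_seq H (g j) (h j) (w j)"
      "\<And>j. finitely_bounded T (w j) (c j *\<^sub>R u)"
      by metis
    have "is_inf_in UNIV (range (\<lambda>n. T (lower_envelope h n))) 0"
      using oc lower_envelope_mem[OF HS] decseq_lower_envelope is_inf_lower_envelope[OF HS HG inf hw(1)]
        hw(1) unfolding sigma_oc_on_def approximating_seq_def by blast
    moreover have "x - \<epsilon> *\<^sub>R u \<le> T (lower_envelope h n)" for n
    proof -
      have "(\<Sum>j\<le>n. c j) = \<epsilon> * (\<Sum>j\<le>n. (1/2) ^ Suc j)"
        unfolding c_def by (rule sum_distrib_left[symmetric])
      also have "\<dots> \<le> \<epsilon>"
        using sum_half_powers_le_one[of n] \<open>\<epsilon> > 0\<close> by (intro mult_left_le) simp_all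
      finally have "(\<Sum>j\<le>n. c j *\<^sub>R u) \<le> \<epsilon> *\<^sub>R u"
        unfolding scaleR_sum_left[symmetric] using u by (rule scaleR_right_mono)
      then have "T (g n) \<le> T (lower_envelope h n) + \<epsilon> *\<^sub>R u"
        using image_le_lower_envelope_add[OF P dec hw] by (meson add_left_mono order_trans)
      moreover have "x \<le> T (g n)" using x by simp
      ultimately show ?thesis by (simp add: diff_le_eq)
    qed
    ultimately have "x - \<epsilon> *\<^sub>R u \<le> 0" unfolding is_inf_in_def by blast
    then show "x \<le> \<epsilon> *\<^sub>R u" by simp
  qed
qed

lemma sigma_oc_on_of_common_bound:
  fixes T :: "'f::{ordered_real_vector, lattice} \<Rightarrow> 'e::{ordered_real_vector, lattice}"
  assumes arch: "archimedean_vl TYPE('e)" and P: "positive_op T" and HS: "vector_sublattice H"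
    and oc: "sigma_oc_on T H" and HG: "H \<subseteq> G"
    and bound: "\<And>g :: nat \<Rightarrow> 'f. (\<And>j. g j \<in> G) \<Longrightarrow> \<exists>u\<ge>0. \<forall>j. approximable T H u (g j)"
  shows "sigma_oc_on T G"
  unfolding sigma_oc_on_def
proof (intro allI impI conjI)
  fix g assume "\<forall>n. g n \<in> G" and dec: "decseq g" and inf: "is_inf_in G (range g) 0"
  show "decseq (\<lambda>n. T (g n))"
    using positive_op_mono[OF P decseq_SucD[OF dec]] by (rule decseq_SucI)
  obtain u where "0 \<le> u" "\<And>j. approximable T H u (g j)"
    using bound \<open>\<forall>n. g n \<in> G\<close> by blast
  then show "is_inf_in UNIV (range (\<lambda>n. T (g n))) 0"
    by (rule is_inf_image_of_approximable[OF arch P HS oc HG dec inf])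
qed

lemma uclosure_common_bound:
  fixes T :: "'f::{ordered_real_vector, lattice} \<Rightarrow> 'e::{ordered_real_vector, lattice}"
    and g :: "nat \<Rightarrow> 'f"
  assumes arch: "archimedean_vl TYPE('f)"
    and sigma: "sigma_property TYPE('f) \<or> sigma_property TYPE('e)"
    and P: "positive_op T" and g: "\<And>j. g j \<in> uclosure H"
  shows "\<exists>u\<ge>0. \<forall>j. approximable T H u (g j)"
  using sigma
proof
  assume sigmaF: "sigma_property TYPE('f)"
  have "\<exists>e. approximable id H e (g j)" for j
    using uclosure_subset_approximable[OF arch sigmaF positive_op_id] g by blast
  then obtain e where "0 \<le> e" "\<And>j. approximable id H e (g j)"
    using approximable_common_bound[where f = g, OF sigmaF] by blast
  then show ?thesis
    using approximable_comp[OF _ P, of id H e] positive_op_nonneg[OF P] by auto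
next
  assume sigmaE: "sigma_property TYPE('e)"
  have "\<exists>u. approximable T H u (g j)" for j
    using uclosure_subset_approximable[OF arch sigmaE P] g by blast
  then show ?thesis
    using approximable_common_bound[where f = g, OF sigmaE] by blast
qed

theorem theorem10p3:
  fixes T :: "'f::{ordered_real_vector, lattice} \<Rightarrow> 'e::{ordered_real_vector, lattice}"
    and H :: "'f set"
  assumes "archimedean_vl TYPE('f)" and "archimedean_vl TYPE('e)"
    and "sigma_property TYPE('f) \<or> sigma_property TYPE('e)"
    and "positive_op T"
    and "vector_sublattice H"
    and "sigma_oc_on T H"
  shows "sigma_oc_on T (uadherence H) \<and> sigma_oc_on T (uclosure H)"
proof -
  have between: "sigma_oc_on T G" if "H \<subseteq> G" "G \<subseteq> uclosure H" for G
  proof (rule sigma_oc_on_of_common_bound[OF assms(2,4,5,6) \<open>H \<subseteq> G\<close>])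
    fix g :: "nat \<Rightarrow> 'f" assume "\<And>j. g j \<in> G"
    then show "\<exists>u\<ge>0. \<forall>j. approximable T H u (g j)"
      using uclosure_common_bound[OF assms(1,3,4)] \<open>G \<subseteq> uclosure H\<close> by blast
  qed
  show ?thesis
    using between[OF subset_uadherence uadherence_subset_uclosure]
      between[OF subset_uclosure order_refl] ..
qed

end
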